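(* Let $a,b,c,d,e,f,g,h\ge0$ and $k,l>0$ be integers with $a+b+c+d>0$, $e+f>0$, $g+h>0$, and let $$E=\begin{bmatrix} J_{k,a}&J_{k,b}&-J_{k,c}&-J_{k,d}&J_{k,e}&-J_{k,f}&0&0\\ -J_{k,a}&-J_{k,b}&J_{k,c}&J_{k,d}&-J_{k,e}&J_{k,f}&0&0\\ J_{l,a}&-J_{l,b}&J_{l,c}&-J_{l,d}&0&0&J_{l,g}&-J_{l,h}\\ -J_{l,a}&J_{l,b}&-J_{l,c}&J_{l,d}&0&0&-J_{l,g}&J_{l,h} \end{bmatrix}$$ satisfy $E\mathbf 1=0$ and $\mathbf 1^TE=0^T$. Then $E$ is realizable if and only if $g-h$ and $e-f$ are even.
   Context: $J_{p,q}$ is the $p\times q$ all-ones matrix. Two $(0,1)$ matrices $A,B$ are Gram mates if $AA^T=BB^T$, $A^TA=B^TB$ and $A\neq B$. A $(0,1,-1)$ matrix $E$ with $E\mathbf 1=0$, $\mathbf 1^TE=0^T$ is realizable if there is a $(0,1)$ matrix $A$ such that $A$ and $A+E$ are Gram mates. *)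

theory Defs
  imports "Jordan_Normal_Form.Matrix"
begin

definition zero_one_mat :: "int mat \<Rightarrow> bool" where
  "zero_one_mat A \<longleftrightarrow> (\<forall>i<dim_row A. \<forall>j<dim_col A. A $$ (i,j) \<in> {0,1})"

definition gram_mates :: "int mat \<Rightarrow> int mat \<Rightarrow> bool" where
  "gram_mates A B \<longleftrightarrow> zero_one_mat A \<and> zero_one_mat B \<and>
     dim_row A = dim_row B \<and> dim_col A = dim_col B \<and>
     A * transpose_mat A = B * transpose_mat B \<and>
     transpose_mat A * A = transpose_mat B * B \<and> A \<noteq> B"

definition realizable :: "int mat \<Rightarrow> bool" where
  "realizable E \<longleftrightarrow> (\<exists>A. dim_row A = dim_row E \<and> dim_col A = dim_col E \<and>
     zero_one_mat A \<and> gram_mates A (A + E))"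

text \<open>Index of the block (w.r.t. consecutive block sizes) containing a position.\<close>
fun blk :: "nat list \<Rightarrow> nat \<Rightarrow> nat" where
  "blk [] i = 0"
| "blk (s # ss) i = (if i < s then 0 else Suc (blk ss (i - s)))"

text \<open>Sign pattern of the 4 x 8 block matrix; block (r,c) is sign * J.\<close>
definition sign_pattern :: "int list list" where
  "sign_pattern =
    [[ 1,  1, -1, -1,  1, -1,  0,  0],
     [-1, -1,  1,  1, -1,  1,  0,  0],
     [ 1, -1,  1, -1,  0,  0,  1, -1],
     [-1,  1, -1,  1,  0,  0, -1,  1]]"

definition E_mat :: "nat \<Rightarrow> nat \<Rightarrow> nat \<Rightarrow> nat \<Rightarrow> nat \<Rightarrow> nat \<Rightarrow> nat \<Rightarrow> nat \<Rightarrow> nat \<Rightarrow> nat \<Rightarrow> int mat" where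
  "E_mat k l a b c d e f g h =
     mat (k + k + l + l) (a + b + c + d + e + f + g + h)
       (\<lambda>(i,j). sign_pattern ! blk [k, k, l, l] i ! blk [a, b, c, d, e, f, g, h] j)"

end

theory Submission
  imports Defs
begin

(* Sufficiency: write g - h = 2 (p - q) and e - f = 2 (p' - q'). Take A forced by E where E is
   nonzero; on the zero blocks of E, let the rows of the first two row blocks have their ones at
   the first p and q columns of blocks g and h, and those of the last two row blocks at the
   first p' and q' columns of blocks e and f. Then each row of A + E is the row of A in the
   partner row block (1 and 2, 3 and 4), so A + E is a row permutation of A and A^T A is
   unchanged; A A^T is unchanged because the row-sum conditions make the inner products of the
   four row types invariant under the partner swap.

   Necessity: the (0,1) conditions force A wherever E is nonzero. Let X be the number of ones
   of the first row of A in block g minus that in block h. The row Gram matrices at the first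
   row and a row of row block 3 (resp. 4) show that this row has d - a - X (resp. c - b + X)
   more ones in block e than in block f; the column Gram matrices at the first column and the
   columns of blocks e and f show that row blocks 3 and 4 have equally many ones in each such
   column. Summing over row blocks 3 and 4 gives d - a - X = c - b + X, so g - h = 2 X and
   e - f = 2 (d - a - X) by the row-sum conditions. *)

lemma sum_lessThan_add: "(\<Sum>j<(x::nat) + y. F j) = (\<Sum>j<x. F j) + (\<Sum>j<y. F (x + j))"
  by (induction y arbitrary: F) (auto simp: add.assoc)

lemma sum_lessThan_of_bool_less: "(\<Sum>j<g. (of_bool (j < p) :: 'a::semiring_1)) = of_nat (min p g)"
proof -
  have "{..<g} \<inter> {j. j < p} = {..<min p g}" by auto
  then show ?thesis by simp
qed

lemma index_mult_transpose_mat: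
  fixes A :: "'a::comm_semiring_0 mat"
  assumes "i < dim_row A" "i' < dim_row A"
  shows "(A * transpose_mat A) $$ (i, i') = (\<Sum>j<dim_col A. A $$ (i, j) * A $$ (i', j))"
  using assms by (simp add: scalar_prod_def atLeast0LessThan)

lemma index_transpose_mult_mat:
  fixes A :: "'a::comm_semiring_0 mat"
  assumes "j < dim_col A" "j' < dim_col A"
  shows "(transpose_mat A * A) $$ (j, j') = (\<Sum>i<dim_row A. A $$ (i, j) * A $$ (i, j'))"
  using assms by (simp add: scalar_prod_def atLeast0LessThan)

lemma mult_transpose_add_eqD:
  fixes A E :: "'a::comm_ring mat"
  assumes "dim_row E = dim_row A" "dim_col E = dim_col A"
    and "A * transpose_mat A = (A + E) * transpose_mat (A + E)"
    and "i < dim_row A" "i' < dim_row A"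
  shows "(\<Sum>j<dim_col A. A $$ (i, j) * E $$ (i', j) + E $$ (i, j) * A $$ (i', j)
           + E $$ (i, j) * E $$ (i', j)) = 0"
proof -
  have "(\<Sum>j<dim_col A. A $$ (i, j) * A $$ (i', j))
      = (\<Sum>j<dim_col A. (A $$ (i, j) + E $$ (i, j)) * (A $$ (i', j) + E $$ (i', j)))"
    using assms index_mult_transpose_mat[of i A i'] index_mult_transpose_mat[of i "A + E" i']
    by simp
  then show ?thesis
    by (simp add: algebra_simps sum.distrib)
qed

lemma transpose_mult_add_eqD:
  fixes A E :: "'a::comm_ring mat"
  assumes "dim_row E = dim_row A" "dim_col E = dim_col A"
    and "transpose_mat A * A = transpose_mat (A + E) * (A + E)"
    and "j < dim_col A" "j' < dim_col A"
  shows "(\<Sum>i<dim_row A. A $$ (i, j) * E $$ (i, j') + E $$ (i, j) * A $$ (i, j')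
           + E $$ (i, j) * E $$ (i, j')) = 0"
proof -
  have "(\<Sum>i<dim_row A. A $$ (i, j) * A $$ (i, j'))
      = (\<Sum>i<dim_row A. (A $$ (i, j) + E $$ (i, j)) * (A $$ (i, j') + E $$ (i, j')))"
    using assms index_transpose_mult_mat[of j A j'] index_transpose_mult_mat[of j "A + E" j']
    by simp
  then show ?thesis
    by (simp add: algebra_simps sum.distrib)
qed

lemma transpose_mult_row_permuted:
  fixes A B :: "'a::comm_semiring_0 mat"
  assumes "dim_row B = dim_row A" "dim_col B = dim_col A"
    and "bij_betw \<sigma> {..<dim_row A} {..<dim_row A}"
    and "\<And>i j. i < dim_row A \<Longrightarrow> j < dim_col A \<Longrightarrow> B $$ (i, j) = A $$ (\<sigma> i, j)"
  shows "transpose_mat B * B = transpose_mat A * A"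
proof (rule eq_matI)
  fix j j' assume "j < dim_row (transpose_mat A * A)" "j' < dim_col (transpose_mat A * A)"
  then have jj': "j < dim_col A" "j' < dim_col A" by simp_all
  have "(transpose_mat B * B) $$ (j, j') = (\<Sum>i<dim_row B. B $$ (i, j) * B $$ (i, j'))"
    by (rule index_transpose_mult_mat) (use assms jj' in simp_all)
  also have "\<dots> = (\<Sum>i<dim_row A. A $$ (\<sigma> i, j) * A $$ (\<sigma> i, j'))"
    using assms jj' by simp
  also have "\<dots> = (\<Sum>i<dim_row A. A $$ (i, j) * A $$ (i, j'))"
    using sum.reindex_bij_betw[OF assms(3)] .
  also have "\<dots> = (transpose_mat A * A) $$ (j, j')"
    using index_transpose_mult_mat[OF jj'] by simp
  finally show "(transpose_mat B * B) $$ (j, j') = (transpose_mat A * A) $$ (j, j')" .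
qed (use assms in simp_all)

lemma zero_one_mat_add_entry:
  fixes A E :: "int mat"
  assumes "zero_one_mat A" "zero_one_mat (A + E)"
    and "dim_row E = dim_row A" "dim_col E = dim_col A"
    and "i < dim_row A" "j < dim_col A"
  shows "E $$ (i, j) = 1 \<Longrightarrow> A $$ (i, j) = 0"
    and "E $$ (i, j) = -1 \<Longrightarrow> A $$ (i, j) = 1"
proof -
  have "A $$ (i, j) \<in> {0, 1}" "A $$ (i, j) + E $$ (i, j) \<in> {0, 1}"
    using assms unfolding zero_one_mat_def by fastforce+
  then show "E $$ (i, j) = 1 \<Longrightarrow> A $$ (i, j) = 0" "E $$ (i, j) = -1 \<Longrightarrow> A $$ (i, j) = 1"
    by auto
qed

lemma self_neq_add_mat:
  fixes A E :: "'a::cancel_comm_monoid_add mat"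
  assumes "dim_row E = dim_row A" "dim_col E = dim_col A"
    and "i < dim_row A" "j < dim_col A" "E $$ (i, j) \<noteq> 0"
  shows "A \<noteq> A + E"
proof
  assume "A = A + E"
  then have "A $$ (i, j) = A $$ (i, j) + E $$ (i, j)"
    using assms by (metis index_add_mat(1))
  then show False
    using assms(5) by simp
qed

lemma blk_less: "i < sum_list ss \<Longrightarrow> blk ss i < length ss"
  by (induction ss arbitrary: i) auto

fun blk_offset :: "nat list \<Rightarrow> nat \<Rightarrow> nat" where
  "blk_offset [] i = i"
| "blk_offset (s # ss) i = (if i < s then i else blk_offset ss (i - s))"

lemma sum_blocks:
  "length C = n \<Longrightarrow>
   (\<Sum>j<sum_list C. F (blk C j) (blk_offset C j)) = (\<Sum>t<n. \<Sum>u<C ! t. F t u)"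
proof (induction C arbitrary: F n)
  case (Cons s C)
  have "(\<Sum>j<sum_list (s # C). F (blk (s # C) j) (blk_offset (s # C) j))
      = (\<Sum>u<s. F 0 u) + (\<Sum>j<sum_list C. F (Suc (blk C j)) (blk_offset C j))"
    by (simp add: sum_lessThan_add)
  also have "\<dots> = (\<Sum>t<n. \<Sum>u<(s # C) ! t. F t u)"
    using Cons.IH[of "length C" "\<lambda>t. F (Suc t)"] Cons.prems[symmetric]
    by (simp add: sum.lessThan_Suc_shift del: sum.lessThan_Suc)
  finally show ?case .
qed simp

definition block_sign :: "nat \<Rightarrow> nat \<Rightarrow> int" where
  "block_sign r t = sign_pattern ! r ! t"

lemma E_mat_dims [simp]:
  "dim_row (E_mat k l a b c d e f g h) = k + k + l + l"
  "dim_col (E_mat k l a b c d e f g h) = a + b + c + d + e + f + g + h"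
  by (simp_all add: E_mat_def)

lemma index_E_mat:
  "i < k + k + l + l \<Longrightarrow> j < a + b + c + d + e + f + g + h \<Longrightarrow>
   E_mat k l a b c d e f g h $$ (i, j)
     = block_sign (blk [k, k, l, l] i) (blk [a, b, c, d, e, f, g, h] j)"
  by (simp add: E_mat_def block_sign_def)

lemma E_mat_first_row_sum:
  assumes "k > 0"
  shows "(\<Sum>j<a + b + c + d + e + f + g + h. E_mat k l a b c d e f g h $$ (0, j))
           = int a + int b - int c - int d + int e - int f"
  using assms by (simp add: index_E_mat sum_lessThan_add block_sign_def sign_pattern_def)

lemma E_mat_third_block_row_sum:
  assumes "l > 0"
  shows "(\<Sum>j<a + b + c + d + e + f + g + h. E_mat k l a b c d e f g h $$ (k + k, j))
           = int a - int b + int c - int d + int g - int h"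
  using assms by (simp add: index_E_mat sum_lessThan_add block_sign_def sign_pattern_def)

lemma E_mat_first_entry_nonzero:
  assumes "k > 0" "a + b + c + d > 0"
  shows "E_mat k l a b c d e f g h $$ (0, 0) \<noteq> 0"
  using assms by (cases "a = 0"; cases "b = 0"; cases "c = 0")
    (simp_all add: index_E_mat block_sign_def sign_pattern_def)

definition partner_block :: "nat \<Rightarrow> nat" where
  "partner_block r = (if r = 0 then 1 else if r = 1 then 0 else if r = 2 then 3 else 2)"

definition realizer_entry :: "nat \<Rightarrow> nat \<Rightarrow> nat \<Rightarrow> nat \<Rightarrow> nat \<Rightarrow> nat \<Rightarrow> nat \<Rightarrow> int" where
  "realizer_entry p q p' q' r t u =
    (if block_sign r t = 1 then 0
     else if block_sign r t = -1 then 1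
     else if r < 2 then of_bool (u < (if t = 6 then p else q))
     else of_bool (u < (if t = 4 then p' else q')))"

(* Numbering the row blocks 0..3, the inner products of the row types are
   c + d + f + p + q, a + b + e + p + q, b + d + h + p' + q', a + c + g + p' + q' (norms),
   p + q (types 0, 1), p' + q' (types 2, 3), d + q' + q (0, 2), a + p' + p (1, 3),
   c + q' + p (0, 3) and b + p' + q (1, 2); the hypotheses make the partner swap preserve them. *)
lemma realizer_entry_inner_partner:
  assumes "p \<le> g" "q \<le> h" "p' \<le> e" "q' \<le> f"
    and "int a + int b + int e = int c + int d + int f"
    and "int a + int c + int g = int b + int d + int h"
    and "2 * (int p - int q) = int g - int h" "2 * (int p' - int q') = int e - int f"
    and "r < 4" "r' < 4"
  shows "(\<Sum>t<8. \<Sum>u<[a, b, c, d, e, f, g, h] ! t.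
            realizer_entry p q p' q' (partner_block r) t u
          * realizer_entry p q p' q' (partner_block r') t u)
       = (\<Sum>t<8. \<Sum>u<[a, b, c, d, e, f, g, h] ! t.
            realizer_entry p q p' q' r t u * realizer_entry p q p' q' r' t u)"
proof -
  have "int d + int q' + int q = int a + int p' + int p"
    and "int c + int q' + int p = int b + int p' + int q"
    using assms(5-8) by presburger+
  moreover have "r = 0 \<or> r = 1 \<or> r = 2 \<or> r = 3" "r' = 0 \<or> r' = 1 \<or> r' = 2 \<or> r' = 3"
    using assms(9,10) by auto
  ultimately show ?thesis
    using assms(1-6) unfolding realizer_entry_def partner_block_def
    by (elim disjE) (simp_all add: eval_nat_numeral block_sign_def sign_pattern_def
          sum_lessThan_of_bool_less min_absorb1)
qed

lemma realizer_entry_01: "realizer_entry p q p' q' r t u \<in> {0, 1}"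
  by (simp add: realizer_entry_def)

lemma realizer_entry_add_block_sign:
  assumes "r < 4" "t < 8"
  shows "realizer_entry p q p' q' r t u + block_sign r t
       = realizer_entry p q p' q' (partner_block r) t u"
proof -
  have "r = 0 \<or> r = 1 \<or> r = 2 \<or> r = 3" using assms(1) by auto
  moreover have "t = 0 \<or> t = 1 \<or> t = 2 \<or> t = 3 \<or> t = 4 \<or> t = 5 \<or> t = 6 \<or> t = 7"
    using assms(2) by auto
  ultimately show ?thesis
    unfolding realizer_entry_def partner_block_def block_sign_def
    by (elim disjE) (simp_all add: sign_pattern_def)
qed

lemma even_int_diff_halves:
  fixes g h :: nat
  assumes "even (int g - int h)"
  obtains p q where "p \<le> g" "q \<le> h" "2 * (int p - int q) = int g - int h"
proof -
  have "\<exists>p q. p \<le> g \<and> q \<le> h \<and> 2 * (int p - int q) = int g - int h"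
    using assms by presburger
  then show ?thesis using that by blast
qed

definition partner_row :: "nat \<Rightarrow> nat \<Rightarrow> nat \<Rightarrow> nat" where
  "partner_row k l i =
    (if i < k then i + k else if i < k + k then i - k else if i < k + k + l then i + l else i - l)"

lemma partner_row:
  assumes "i < k + k + l + l"
  shows "partner_row k l i < k + k + l + l" "partner_row k l (partner_row k l i) = i"
    "blk [k, k, l, l] (partner_row k l i) = partner_block (blk [k, k, l, l] i)"
proof -
  consider "i < k" | "k \<le> i" "i < k + k" | "k + k \<le> i" "i < k + k + l" | "k + k + l \<le> i"
    by linarith
  note row_block_cases = this
  show "partner_row k l i < k + k + l + l"
    using row_block_cases assms by cases (auto simp: partner_row_def)
  show "partner_row k l (partner_row k l i) = i"
    using row_block_cases assms by cases (auto simp: partner_row_def)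
  show "blk [k, k, l, l] (partner_row k l i) = partner_block (blk [k, k, l, l] i)"
    using row_block_cases assms by cases (auto simp: partner_row_def partner_block_def)
qed

locale E_mat_construction =
  fixes k l a b c d e f g h p q p' q' :: nat
  assumes halves: "p \<le> g" "q \<le> h" "p' \<le> e" "q' \<le> f"
      "2 * (int p - int q) = int g - int h" "2 * (int p' - int q') = int e - int f"
    and row_sums: "int a + int b + int e = int c + int d + int f"
      "int a + int c + int g = int b + int d + int h"
begin

definition realizer :: "int mat" where
  "realizer = mat (k + k + l + l) (a + b + c + d + e + f + g + h)
     (\<lambda>(i, j). realizer_entry p q p' q' (blk [k, k, l, l] i) (blk [a, b, c, d, e, f, g, h] j)
                (blk_offset [a, b, c, d, e, f, g, h] j))"

lemma dim_realizer [simp]: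
  "dim_row realizer = k + k + l + l" "dim_col realizer = a + b + c + d + e + f + g + h"
  by (simp_all add: realizer_def)

lemma index_realizer:
  assumes "i < k + k + l + l" "j < a + b + c + d + e + f + g + h"
  shows "realizer $$ (i, j) = realizer_entry p q p' q' (blk [k, k, l, l] i)
           (blk [a, b, c, d, e, f, g, h] j) (blk_offset [a, b, c, d, e, f, g, h] j)"
  using assms by (simp add: realizer_def)

definition row_type_inner :: "nat \<Rightarrow> nat \<Rightarrow> int" where
  "row_type_inner r r' = (\<Sum>t<8. \<Sum>u<[a, b, c, d, e, f, g, h] ! t.
     realizer_entry p q p' q' r t u * realizer_entry p q p' q' r' t u)"

lemma row_type_inner_partner:
  assumes "r < 4" "r' < 4"
  shows "row_type_inner (partner_block r) (partner_block r') = row_type_inner r r'"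
  unfolding row_type_inner_def
  using halves(1-4) row_sums halves(5,6) assms by (rule realizer_entry_inner_partner)

lemma index_mult_transpose_realizer:
  assumes "i < k + k + l + l" "i' < k + k + l + l"
  shows "(realizer * transpose_mat realizer) $$ (i, i')
       = row_type_inner (blk [k, k, l, l] i) (blk [k, k, l, l] i')"
proof -
  let ?r = "blk [k, k, l, l] i" and ?r' = "blk [k, k, l, l] i'" and ?C = "[a, b, c, d, e, f, g, h]"
  have "(realizer * transpose_mat realizer) $$ (i, i')
      = (\<Sum>j<sum_list ?C. realizer $$ (i, j) * realizer $$ (i', j))"
    using assms index_mult_transpose_mat[of i realizer i'] by (simp add: add.assoc)
  also have "\<dots> = (\<Sum>j<sum_list ?C. realizer_entry p q p' q' ?r (blk ?C j) (blk_offset ?C j)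
                                  * realizer_entry p q p' q' ?r' (blk ?C j) (blk_offset ?C j))"
    using assms
    by (intro sum.cong refl)
      (simp only: index_realizer lessThan_iff sum_list_simps add.assoc add_0_right)
  also have "\<dots> = row_type_inner ?r ?r'"
    unfolding row_type_inner_def
    by (rule sum_blocks[of _ _
          "\<lambda>t u. realizer_entry p q p' q' ?r t u * realizer_entry p q p' q' ?r' t u"])
      simp
  finally show ?thesis .
qed

lemma realizer_add_E_mat:
  assumes "i < k + k + l + l" "j < a + b + c + d + e + f + g + h"
  shows "realizer $$ (i, j) + E_mat k l a b c d e f g h $$ (i, j)
       = realizer $$ (partner_row k l i, j)"
proof -
  have "blk [k, k, l, l] i < 4" "blk [a, b, c, d, e, f, g, h] j < 8"
    using assms blk_less[of i "[k, k, l, l]"] blk_less[of j "[a, b, c, d, e, f, g, h]"] by simp_all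
  then show ?thesis
    using assms partner_row[OF assms(1)]
    by (simp only: index_realizer index_E_mat realizer_entry_add_block_sign)
qed

lemma zero_one_realizer: "zero_one_mat realizer"
  using realizer_entry_01 by (simp add: zero_one_mat_def index_realizer)

lemma zero_one_realizer_add_E_mat: "zero_one_mat (realizer + E_mat k l a b c d e f g h)"
  unfolding zero_one_mat_def
proof (intro allI impI)
  fix i j assume "i < dim_row (realizer + E_mat k l a b c d e f g h)"
    "j < dim_col (realizer + E_mat k l a b c d e f g h)"
  then have ij: "i < k + k + l + l" "j < a + b + c + d + e + f + g + h" by simp_all
  then have "(realizer + E_mat k l a b c d e f g h) $$ (i, j) = realizer $$ (partner_row k l i, j)"
    by (simp add: realizer_add_E_mat)
  also have "\<dots> \<in> {0, 1}"
    using zero_one_realizer partner_row(1)[OF ij(1)] ij unfolding zero_one_mat_def by simp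
  finally show "(realizer + E_mat k l a b c d e f g h) $$ (i, j) \<in> {0, 1}" .
qed

lemma realizer_mult_transpose:
  "(realizer + E_mat k l a b c d e f g h) * transpose_mat (realizer + E_mat k l a b c d e f g h)
     = realizer * transpose_mat realizer"
proof (rule eq_matI)
  fix i i' assume "i < dim_row (realizer * transpose_mat realizer)"
    "i' < dim_col (realizer * transpose_mat realizer)"
  then have ii': "i < k + k + l + l" "i' < k + k + l + l" by simp_all
  let ?B = "realizer + E_mat k l a b c d e f g h" and ?R = "[k, k, l, l]"
  have "(?B * transpose_mat ?B) $$ (i, i') = (\<Sum>j<dim_col ?B. ?B $$ (i, j) * ?B $$ (i', j))"
    by (rule index_mult_transpose_mat) (use ii' in simp_all)
  also have "\<dots> = (\<Sum>j<dim_col realizer.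
      realizer $$ (partner_row k l i, j) * realizer $$ (partner_row k l i', j))"
    using ii' by (intro sum.cong) (simp_all add: realizer_add_E_mat)
  also have "\<dots> = (realizer * transpose_mat realizer) $$ (partner_row k l i, partner_row k l i')"
    by (rule index_mult_transpose_mat[symmetric]) (use ii' partner_row(1) in simp_all)
  also have "\<dots> = row_type_inner (blk ?R (partner_row k l i)) (blk ?R (partner_row k l i'))"
    by (rule index_mult_transpose_realizer) (use ii' partner_row(1) in simp_all)
  also have "\<dots> = row_type_inner (partner_block (blk ?R i)) (partner_block (blk ?R i'))"
    using ii' by (simp only: partner_row(3))
  also have "\<dots> = row_type_inner (blk ?R i) (blk ?R i')"
    using ii' blk_less[of i ?R] blk_less[of i' ?R] by (intro row_type_inner_partner) simp_all
  also have "\<dots> = (realizer * transpose_mat realizer) $$ (i, i')"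
    using ii' by (simp only: index_mult_transpose_realizer)
  finally show "(?B * transpose_mat ?B) $$ (i, i') = (realizer * transpose_mat realizer) $$ (i, i')" .
qed simp_all

lemma realizer_transpose_mult:
  "transpose_mat (realizer + E_mat k l a b c d e f g h) * (realizer + E_mat k l a b c d e f g h)
     = transpose_mat realizer * realizer"
proof (rule transpose_mult_row_permuted)
  show "bij_betw (partner_row k l) {..<dim_row realizer} {..<dim_row realizer}"
    using partner_row(1,2) by (intro bij_betw_byWitness[where f' = "partner_row k l"]) auto
qed (simp_all add: realizer_add_E_mat)

end

lemma realizable_E_mat:
  assumes "k > 0" "a + b + c + d > 0"
    and "int a + int b + int e = int c + int d + int f"
    and "int a + int c + int g = int b + int d + int h"
    and "even (int g - int h)" "even (int e - int f)"
  shows "realizable (E_mat k l a b c d e f g h)"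
proof -
  obtain p q where "p \<le> g" "q \<le> h" "2 * (int p - int q) = int g - int h"
    using even_int_diff_halves assms(5) .
  moreover obtain p' q' where "p' \<le> e" "q' \<le> f" "2 * (int p' - int q') = int e - int f"
    using even_int_diff_halves assms(6) .
  ultimately interpret E_mat_construction k l a b c d e f g h p q p' q'
    using assms(3,4) by unfold_locales
  have "realizer \<noteq> realizer + E_mat k l a b c d e f g h"
    using assms(1,2) E_mat_first_entry_nonzero
    by (intro self_neq_add_mat[of _ _ 0 0]) simp_all
  then show ?thesis
    unfolding realizable_def gram_mates_def
    using zero_one_realizer zero_one_realizer_add_E_mat realizer_mult_transpose
      realizer_transpose_mult
    by (intro exI[of _ realizer]) simp
qed

locale E_mat_realization =
  fixes k l a b c d e f g h :: nat and A :: "int mat"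
  assumes k_pos: "k > 0" and l_pos: "l > 0" and abcd_pos: "a + b + c + d > 0"
    and row_sums: "int a + int b + int e = int c + int d + int f"
      "int a + int c + int g = int b + int d + int h"
    and dim_A: "dim_row A = k + k + l + l" "dim_col A = a + b + c + d + e + f + g + h"
    and mates: "gram_mates A (A + E_mat k l a b c d e f g h)"
begin

abbreviation sign_at :: "nat \<Rightarrow> nat \<Rightarrow> int" where
  "sign_at i j \<equiv> block_sign (blk [k, k, l, l] i) (blk [a, b, c, d, e, f, g, h] j)"

lemma forced_entries:
  assumes "i < k + k + l + l" "j < a + b + c + d + e + f + g + h"
  shows "sign_at i j = 1 \<Longrightarrow> A $$ (i, j) = 0" and "sign_at i j = -1 \<Longrightarrow> A $$ (i, j) = 1"
proof -
  have "zero_one_mat A" "zero_one_mat (A + E_mat k l a b c d e f g h)"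
    using mates by (simp_all add: gram_mates_def)
  moreover have "E_mat k l a b c d e f g h $$ (i, j) = sign_at i j"
    using assms by (rule index_E_mat)
  ultimately show "sign_at i j = 1 \<Longrightarrow> A $$ (i, j) = 0" "sign_at i j = -1 \<Longrightarrow> A $$ (i, j) = 1"
    using zero_one_mat_add_entry[of A "E_mat k l a b c d e f g h" i j] dim_A assms
    by (metis E_mat_dims)+
qed

lemma row_relation:
  assumes "i < k + k + l + l" "i' < k + k + l + l"
  shows "(\<Sum>j<a + b + c + d + e + f + g + h.
            A $$ (i, j) * sign_at i' j + sign_at i j * A $$ (i', j) + sign_at i j * sign_at i' j) = 0"
proof -
  let ?E = "E_mat k l a b c d e f g h"
  have "(\<Sum>j<a + b + c + d + e + f + g + h.
            A $$ (i, j) * sign_at i' j + sign_at i j * A $$ (i', j) + sign_at i j * sign_at i' j)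
      = (\<Sum>j<dim_col A. A $$ (i, j) * ?E $$ (i', j) + ?E $$ (i, j) * A $$ (i', j)
          + ?E $$ (i, j) * ?E $$ (i', j))"
    using assms by (intro sum.cong) (simp_all only: dim_A lessThan_iff index_E_mat)
  also have "\<dots> = 0"
    using mates dim_A assms by (intro mult_transpose_add_eqD) (simp_all add: gram_mates_def)
  finally show ?thesis .
qed

lemma col_relation:
  assumes "j < a + b + c + d + e + f + g + h" "j' < a + b + c + d + e + f + g + h"
  shows "(\<Sum>i<k + k + l + l.
            A $$ (i, j) * sign_at i j' + sign_at i j * A $$ (i, j') + sign_at i j * sign_at i j') = 0"
proof -
  let ?E = "E_mat k l a b c d e f g h"
  have "(\<Sum>i<k + k + l + l.
            A $$ (i, j) * sign_at i j' + sign_at i j * A $$ (i, j') + sign_at i j * sign_at i j')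
      = (\<Sum>i<dim_row A. A $$ (i, j) * ?E $$ (i, j') + ?E $$ (i, j) * A $$ (i, j')
          + ?E $$ (i, j) * ?E $$ (i, j'))"
    using assms by (intro sum.cong) (simp_all only: dim_A lessThan_iff index_E_mat)
  also have "\<dots> = 0"
    using mates dim_A assms by (intro transpose_mult_add_eqD) (simp_all add: gram_mates_def)
  finally show ?thesis .
qed

definition gh_excess :: int where
  "gh_excess = (\<Sum>j<g. A $$ (0, a + b + c + d + e + f + j))
             - (\<Sum>j<h. A $$ (0, a + b + c + d + e + f + g + j))"

definition ef_excess :: "nat \<Rightarrow> int" where
  "ef_excess i = (\<Sum>j<e. A $$ (i, a + b + c + d + j)) - (\<Sum>j<f. A $$ (i, a + b + c + d + e + j))"

lemma ef_excess_third_block: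
  assumes "t < l"
  shows "ef_excess (k + k + t) = int d - int a - gh_excess"
  using row_relation[of 0 "k + k + t"] assms k_pos
  by (simp add: sum_lessThan_add block_sign_def sign_pattern_def)
    (simp add: block_sign_def sign_pattern_def forced_entries gh_excess_def ef_excess_def sum_negf)

lemma ef_excess_fourth_block:
  assumes "t < l"
  shows "ef_excess (k + k + l + t) = int c - int b + gh_excess"
  using row_relation[of 0 "k + k + l + t"] assms k_pos
  by (simp add: sum_lessThan_add block_sign_def sign_pattern_def)
    (simp add: block_sign_def sign_pattern_def forced_entries gh_excess_def ef_excess_def sum_negf)

(* Column 0 lies in the first nonempty one of the first four column blocks. *)
lemma e_columns_balanced:
  assumes "t < e"
  shows "(\<Sum>i<l. A $$ (k + k + i, a + b + c + d + t))
       = (\<Sum>i<l. A $$ (k + k + l + i, a + b + c + d + t))"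
proof -
  consider "a > 0" | "a = 0" "b > 0" | "a = 0" "b = 0" "c > 0" | "a = 0" "b = 0" "c = 0" "d > 0"
    using abcd_pos by linarith
  then show ?thesis
    using col_relation[of 0 "a + b + c + d + t"] assms k_pos
    by cases (simp add: sum_lessThan_add block_sign_def sign_pattern_def;
      simp add: block_sign_def sign_pattern_def forced_entries sum_negf)+
qed

lemma f_columns_balanced:
  assumes "t < f"
  shows "(\<Sum>i<l. A $$ (k + k + i, a + b + c + d + e + t))
       = (\<Sum>i<l. A $$ (k + k + l + i, a + b + c + d + e + t))"
proof -
  consider "a > 0" | "a = 0" "b > 0" | "a = 0" "b = 0" "c > 0" | "a = 0" "b = 0" "c = 0" "d > 0"
    using abcd_pos by linarith
  then show ?thesis
    using col_relation[of 0 "a + b + c + d + e + t"] assms k_pos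
    by cases (simp add: sum_lessThan_add block_sign_def sign_pattern_def;
      simp add: block_sign_def sign_pattern_def forced_entries sum_negf)+
qed

lemma gh_excess_balance: "int d - int a - gh_excess = int c - int b + gh_excess"
proof -
  have "(\<Sum>t<l. \<Sum>j<e. A $$ (k + k + t, a + b + c + d + j))
      = (\<Sum>t<l. \<Sum>j<e. A $$ (k + k + l + t, a + b + c + d + j))"
    by (subst (1 2) sum.swap) (simp add: e_columns_balanced)
  moreover have "(\<Sum>t<l. \<Sum>j<f. A $$ (k + k + t, a + b + c + d + e + j))
      = (\<Sum>t<l. \<Sum>j<f. A $$ (k + k + l + t, a + b + c + d + e + j))"
    by (subst (1 2) sum.swap) (simp add: f_columns_balanced)
  ultimately have "(\<Sum>t<l. ef_excess (k + k + t)) = (\<Sum>t<l. ef_excess (k + k + l + t))"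
    unfolding ef_excess_def sum_subtractf by simp
  then have "int l * (int d - int a - gh_excess) = int l * (int c - int b + gh_excess)"
    by (simp add: ef_excess_third_block ef_excess_fourth_block)
  then show ?thesis
    using l_pos by simp
qed

lemma differences_eq_twice:
  "int g - int h = 2 * gh_excess" "int e - int f = 2 * (int d - int a - gh_excess)"
  using gh_excess_balance row_sums by presburger+

end

lemma realizable_E_mat_imp_even:
  assumes "k > 0" "l > 0" "a + b + c + d > 0"
    and "int a + int b + int e = int c + int d + int f"
    and "int a + int c + int g = int b + int d + int h"
    and "realizable (E_mat k l a b c d e f g h)"
  shows "even (int g - int h) \<and> even (int e - int f)"
proof -
  obtain A where "dim_row A = k + k + l + l" "dim_col A = a + b + c + d + e + f + g + h"
    and "gram_mates A (A + E_mat k l a b c d e f g h)"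
    using assms(6) by (auto simp: realizable_def)
  then interpret E_mat_realization k l a b c d e f g h A
    using assms(1-5) by unfold_locales
  show ?thesis
    using differences_eq_twice by simp
qed

theorem corollary4p16:
  fixes a b c d e f g h k l :: nat
  assumes "k > 0" and "l > 0"
    and "a + b + c + d > 0" and "e + f > 0" and "g + h > 0"
    and "\<forall>i < dim_row (E_mat k l a b c d e f g h).
           (\<Sum>j < dim_col (E_mat k l a b c d e f g h). E_mat k l a b c d e f g h $$ (i, j)) = 0"
    and "\<forall>j < dim_col (E_mat k l a b c d e f g h).
           (\<Sum>i < dim_row (E_mat k l a b c d e f g h). E_mat k l a b c d e f g h $$ (i, j)) = 0"
  shows "realizable (E_mat k l a b c d e f g h) \<longleftrightarrow>
           even (int g - int h) \<and> even (int e - int f)"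
proof -
  have rs1: "int a + int b + int e = int c + int d + int f"
    using assms(6)[rule_format, of 0] assms(1) E_mat_first_row_sum[OF assms(1)] by simp
  have rs2: "int a + int c + int g = int b + int d + int h"
    using assms(6)[rule_format, of "k + k"] assms(2) E_mat_third_block_row_sum[OF assms(2)] by simp
  show ?thesis
    using realizable_E_mat[OF assms(1,3) rs1 rs2] realizable_E_mat_imp_even[OF assms(1-3) rs1 rs2]
    by blast
qed

end
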